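(* Let $f:\mathbb{R}^p\to\mathbb{R}$ be convex and twice continuously differentiable (not necessarily strictly convex), with the setting below. Let $I\subset(0,\infty)$ be an open interval such that for every $\rho\in I$ the function $\mathcal{E}_\rho$ has a unique minimizer $\mathbf{x}(\rho)$, the map $\rho\mapsto\mathbf{x}(\rho)$ is continuous on $I$, the index sets computed at $\mathbf{x}(\rho)$ do not depend on $\rho\in I$, and the rows of $\mathbf{U}_{\mathcal{Z}}$ are linearly independent. Let $\mathbf{Y}\in\mathbb{R}^{p\times(p-|\mathcal{Z}|)}$ be a matrix whose columns form a basis of the null space $\{\mathbf{y}:\mathbf{U}_{\mathcal{Z}}\mathbf{y}=\mathbf{0}\}$, where $|\mathcal{Z}|=|\mathcal{Z}_E|+|\mathcal{Z}_I|$, and assume $\mathbf{Y}^t d^2f(\mathbf{x}(\rho))\mathbf{Y}$ is nonsingular for every $\rho\in I$. Then $\rho\mapsto\mathbf{x}(\rho)$ is differentiable on $I$ and $$\frac{d\mathbf{x}(\rho)}{d\rho}=-\mathbf{Y}\,[\mathbf{Y}^t\mathbf{H}(\mathbf{x}(\rho))\mathbf{Y}]^{-1}\mathbf{Y}^t\mathbf{u}_{\bar{\mathcal{Z}}},$$ where $\mathbf{H}(\mathbf{x})=d^2f(\mathbf{x})$.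
   Context: Setting: $g_i(\mathbf{x})=\mathbf{v}_i^t\mathbf{x}-d_i$ ($1\le i\le r$), $h_j(\mathbf{x})=\mathbf{w}_j^t\mathbf{x}-e_j$ ($1\le j\le s$); $\mathcal{E}_\rho(\mathbf{x})=f(\mathbf{x})+\rho\sum_i|g_i(\mathbf{x})|+\rho\sum_j\max\{0,h_j(\mathbf{x})\}$. Index sets at $\mathbf{x}$: $\mathcal{N}_E=\{i:g_i(\mathbf{x})<0\}$, $\mathcal{Z}_E=\{i:g_i(\mathbf{x})=0\}$, $\mathcal{P}_E=\{i:g_i(\mathbf{x})>0\}$, $\mathcal{N}_I=\{j:h_j(\mathbf{x})<0\}$, $\mathcal{Z}_I=\{j:h_j(\mathbf{x})=0\}$, $\mathcal{P}_I=\{j:h_j(\mathbf{x})>0\}$. $\mathbf{U}_{\mathcal{Z}}$ is the matrix with rows $\mathbf{v}_i^t$ ($i\in\mathcal{Z}_E$) and $\mathbf{w}_j^t$ ($j\in\mathcal{Z}_I$); $\mathbf{u}_{\bar{\mathcal{Z}}}=-\sum_{i\in\mathcal{N}_E}\mathbf{v}_i+\sum_{i\in\mathcal{P}_E}\mathbf{v}_i+\sum_{j\in\mathcal{P}_I}\mathbf{w}_j$. *)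

theory Defs
  imports "HOL-Analysis.Analysis"
begin

text \<open>Exact penalty function E_rho, with g_i(x) = v_i . x - d_i (1 <= i <= r),
  h_j(x) = w_j . x - e_j (1 <= j <= s).\<close>
definition penalty ::
  "('a::euclidean_space \<Rightarrow> real) \<Rightarrow> (nat \<Rightarrow> 'a) \<Rightarrow> (nat \<Rightarrow> real) \<Rightarrow> nat \<Rightarrow>
   (nat \<Rightarrow> 'a) \<Rightarrow> (nat \<Rightarrow> real) \<Rightarrow> nat \<Rightarrow> real \<Rightarrow> 'a \<Rightarrow> real" where
  "penalty f v d r w e s \<rho> x =
     f x + \<rho> * (\<Sum>i=1..r. \<bar>v i \<bullet> x - d i\<bar>) + \<rho> * (\<Sum>j=1..s. max 0 (w j \<bullet> x - e j))"

definition idxN :: "(nat \<Rightarrow> 'a::real_inner) \<Rightarrow> (nat \<Rightarrow> real) \<Rightarrow> nat \<Rightarrow> 'a \<Rightarrow> nat set" where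
  "idxN v d r x = {i \<in> {1..r}. v i \<bullet> x - d i < 0}"
definition idxZ :: "(nat \<Rightarrow> 'a::real_inner) \<Rightarrow> (nat \<Rightarrow> real) \<Rightarrow> nat \<Rightarrow> 'a \<Rightarrow> nat set" where
  "idxZ v d r x = {i \<in> {1..r}. v i \<bullet> x - d i = 0}"
definition idxP :: "(nat \<Rightarrow> 'a::real_inner) \<Rightarrow> (nat \<Rightarrow> real) \<Rightarrow> nat \<Rightarrow> 'a \<Rightarrow> nat set" where
  "idxP v d r x = {i \<in> {1..r}. v i \<bullet> x - d i > 0}"

definition u_barZ ::
  "(nat \<Rightarrow> 'a::real_inner) \<Rightarrow> (nat \<Rightarrow> real) \<Rightarrow> nat \<Rightarrow> (nat \<Rightarrow> 'a) \<Rightarrow> (nat \<Rightarrow> real) \<Rightarrow> nat \<Rightarrow> 'a \<Rightarrow> 'a" where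
  "u_barZ v d r w e s x =
     - (\<Sum>i\<in>idxN v d r x. v i) + (\<Sum>i\<in>idxP v d r x. v i) + (\<Sum>j\<in>idxP w e s x. w j)"

text \<open>Square k x k matrices represented as nat => nat => real (entries with indices < k).\<close>
definition kmat_mult :: "nat \<Rightarrow> (nat \<Rightarrow> nat \<Rightarrow> real) \<Rightarrow> (nat \<Rightarrow> nat \<Rightarrow> real) \<Rightarrow> nat \<Rightarrow> nat \<Rightarrow> real" where
  "kmat_mult k A B = (\<lambda>i j. \<Sum>l<k. A i l * B l j)"

definition kmat_is_inverse :: "nat \<Rightarrow> (nat \<Rightarrow> nat \<Rightarrow> real) \<Rightarrow> (nat \<Rightarrow> nat \<Rightarrow> real) \<Rightarrow> bool" where
  "kmat_is_inverse k M N \<longleftrightarrow>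
     (\<forall>i<k. \<forall>j<k. kmat_mult k M N i j = (if i = j then 1 else 0)
                \<and> kmat_mult k N M i j = (if i = j then 1 else 0))"

definition kmat_nonsingular :: "nat \<Rightarrow> (nat \<Rightarrow> nat \<Rightarrow> real) \<Rightarrow> bool" where
  "kmat_nonsingular k M \<longleftrightarrow> (\<exists>N. kmat_is_inverse k M N)"

text \<open>The inverse matrix (entries outside the k x k block set to 0 to make it unique).\<close>
definition kmat_inv :: "nat \<Rightarrow> (nat \<Rightarrow> nat \<Rightarrow> real) \<Rightarrow> nat \<Rightarrow> nat \<Rightarrow> real" where
  "kmat_inv k M = (THE N. kmat_is_inverse k M N \<and> (\<forall>i j. (k \<le> i \<or> k \<le> j) \<longrightarrow> N i j = 0))"

end

theory Submission
  imports Defs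
begin

(* Fix rho0 in I and write x0 = x(rho0), H0 = H(x0), u = u_barZ(x0).
   (1) First-order condition: along a direction y in the null space of U_Z the
       absolute values and positive parts in E_rho are affine near t = 0, so
       t |-> E_rho(x + t y) is differentiable at 0 with derivative
       grad(x).y + rho u_barZ(x).y, which must vanish at a minimizer.
   (2) Reduced Newton operator: with N = (Y^t H0 Y)^-1 (kmat_inv is a genuine
       inverse) the map Psi b = Y N Y^t b is linear, kills every b orthogonal to
       the columns of Y and inverts H0 on span Y.
   (3) Since the index sets are constant on I, x(rho) - x0 lies in span Y and,
       by (1) at rho and rho0, Psi (grad(x rho) - grad x0) = -(rho - rho0) Psi u.
       An abstract linearization lemma, has_vector_derivative_from_linearization,
       turns these two facts into x'(rho0) = - Psi u, the claimed formula. *)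

section \<open>Inverses of square matrices given by entry functions\<close>

text \<open>If a k x k matrix is nonsingular, then the normalized inverse kmat_inv is a
  two-sided inverse: the inverse restricted to the k x k block is the unique
  inverse vanishing outside that block.\<close>
lemma kmat_inv_inverse:
  assumes "kmat_nonsingular k M"
  shows "kmat_is_inverse k M (kmat_inv k M)"
proof -
  obtain N0 where N0: "kmat_is_inverse k M N0" using assms kmat_nonsingular_def by blast
  define N1 where "N1 = (\<lambda>i j. if i < k \<and> j < k then N0 i j else 0)"
  have "kmat_mult k M N1 i j = kmat_mult k M N0 i j" if "j < k" for i j
    using that by (auto simp: kmat_mult_def N1_def intro!: sum.cong)
  moreover have "kmat_mult k N1 M i j = kmat_mult k N0 M i j" if "i < k" for i j
    using that by (auto simp: kmat_mult_def N1_def intro!: sum.cong)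
  ultimately have N1: "kmat_is_inverse k M N1 \<and> (\<forall>i j. (k \<le> i \<or> k \<le> j) \<longrightarrow> N1 i j = 0)"
    using N0 by (auto simp: kmat_is_inverse_def N1_def)
  have unique: "N = N1" if N: "kmat_is_inverse k M N \<and> (\<forall>i j. (k \<le> i \<or> k \<le> j) \<longrightarrow> N i j = 0)" for N
  proof (intro ext)
    fix i j
    show "N i j = N1 i j"
    proof (cases "i < k \<and> j < k")
      case True
      text \<open>Associativity: N = N (M N1) = (N M) N1 = N1 on the block.\<close>
      have "N i j = (\<Sum>l<k. N i l * (if l = j then 1 else 0))"
        using True by (simp add: if_distrib cong: if_cong)
      also have "\<dots> = (\<Sum>l<k. N i l * kmat_mult k M N1 l j)"
        using N1 True by (auto simp: kmat_is_inverse_def intro!: sum.cong)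
      also have "\<dots> = (\<Sum>m<k. kmat_mult k N M i m * N1 m j)"
        unfolding kmat_mult_def sum_distrib_left sum_distrib_right
        by (subst sum.swap) (simp add: mult.assoc)
      also have "\<dots> = (\<Sum>m<k. (if i = m then 1 else 0) * N1 m j)"
        using N True by (auto simp: kmat_is_inverse_def intro!: sum.cong)
      also have "\<dots> = (\<Sum>m<k. (if m = i then N1 m j else 0))" by (rule sum.cong) auto
      also have "\<dots> = N1 i j" using True by (simp add: sum.delta)
      finally show ?thesis .
    qed (use N N1 in auto)
  qed
  have "\<exists>!N. kmat_is_inverse k M N \<and> (\<forall>i j. (k \<le> i \<or> k \<le> j) \<longrightarrow> N i j = 0)"
    using N1 unique by blast
  from theI'[OF this] show ?thesis unfolding kmat_inv_def by blast
qed

section \<open>The first-order condition for the exact penalty function\<close>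

definition null_space_UZ ::
  "(nat \<Rightarrow> 'a::real_inner) \<Rightarrow> (nat \<Rightarrow> real) \<Rightarrow> nat \<Rightarrow> (nat \<Rightarrow> 'a) \<Rightarrow> (nat \<Rightarrow> real) \<Rightarrow> nat \<Rightarrow> 'a \<Rightarrow> 'a set" where
  "null_space_UZ v d r w e s x =
     {y. (\<forall>i\<in>idxZ v d r x. v i \<bullet> y = 0) \<and> (\<forall>j\<in>idxZ w e s x. w j \<bullet> y = 0)}"

lemma diff_in_null_space_UZ:
  assumes "idxZ v d r x = idxZ v d r x'" and "idxZ w e s x = idxZ w e s x'"
  shows "x - x' \<in> null_space_UZ v d r w e s x'"
  using assms unfolding null_space_UZ_def by (auto simp: idxZ_def inner_diff_right)

lemma sgn_affine_eventually_const:
  fixes a b :: real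
  assumes "a = 0 \<Longrightarrow> b = 0"
  shows "\<forall>\<^sub>F t in nhds 0. sgn (a + t * b) = sgn a"
proof -
  have "((\<lambda>t. a + t * b) \<longlongrightarrow> a + 0 * b) (nhds 0)"
    by (intro tendsto_intros filterlim_ident)
  then have lim: "((\<lambda>t. a + t * b) \<longlongrightarrow> a) (nhds 0)" by simp
  consider "a < 0" | "a > 0" | "a = 0" by linarith
  then show ?thesis
  proof cases
    case 1
    show ?thesis using order_tendstoD(2)[OF lim 1] by eventually_elim (use 1 in simp)
  next
    case 2
    show ?thesis using order_tendstoD(1)[OF lim 2] by eventually_elim (use 2 in simp)
  qed (use assms in simp)
qed

lemma abs_affine_eventually:
  fixes a b :: real
  assumes "a = 0 \<Longrightarrow> b = 0"
  shows "\<forall>\<^sub>F t in nhds 0. \<bar>a + t * b\<bar> = \<bar>a\<bar> + t * (sgn a * b)"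
proof -
  have "\<forall>\<^sub>F t in nhds 0. sgn (a + t * b) = sgn a"
    by (rule sgn_affine_eventually_const) (rule assms)
  then show ?thesis
  proof eventually_elim
    case (elim t)
    have "\<bar>a + t * b\<bar> = (a + t * b) * sgn (a + t * b)" by (rule abs_sgn)
    also have "\<dots> = (a + t * b) * sgn a" using elim by simp
    also have "\<dots> = \<bar>a\<bar> + t * (sgn a * b)" by (simp add: abs_sgn[of a] algebra_simps)
    finally show ?case .
  qed
qed

lemma pos_part_affine_eventually:
  fixes a b :: real
  assumes "a = 0 \<Longrightarrow> b = 0"
  shows "\<forall>\<^sub>F t in nhds 0. max 0 (a + t * b) = max 0 a + t * (if a > 0 then b else 0)"
proof -
  have "\<forall>\<^sub>F t in nhds 0. sgn (a + t * b) = sgn a"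
    by (rule sgn_affine_eventually_const) (rule assms)
  then show ?thesis by eventually_elim (auto simp: sgn_if split: if_splits)
qed

lemma penalty_slope_eq_u_barZ:
  "(\<Sum>i=1..r. sgn (v i \<bullet> x - d i) * (v i \<bullet> y)) + (\<Sum>j=1..s. if w j \<bullet> x - e j > 0 then w j \<bullet> y else 0)
     = u_barZ v d r w e s x \<bullet> y"
proof -
  have "(\<Sum>i=1..r. sgn (v i \<bullet> x - d i) * (v i \<bullet> y))
        = (\<Sum>i\<in>idxP v d r x. v i \<bullet> y) - (\<Sum>i\<in>idxN v d r x. v i \<bullet> y)"
  proof -
    have "(\<Sum>i=1..r. sgn (v i \<bullet> x - d i) * (v i \<bullet> y))
          = (\<Sum>i=1..r. (if v i \<bullet> x - d i > 0 then v i \<bullet> y else 0)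
                     - (if v i \<bullet> x - d i < 0 then v i \<bullet> y else 0))"
      by (rule sum.cong) (auto simp: sgn_if)
    then show ?thesis
      unfolding idxP_def idxN_def sum.inter_filter[OF finite_atLeastAtMost] by (simp add: sum_subtractf)
  qed
  moreover have "(\<Sum>j=1..s. if w j \<bullet> x - e j > 0 then w j \<bullet> y else 0) = (\<Sum>j\<in>idxP w e s x. w j \<bullet> y)"
    unfolding idxP_def sum.inter_filter[OF finite_atLeastAtMost] ..
  ultimately show ?thesis
    by (simp add: u_barZ_def inner_add_left inner_diff_left inner_sum_left)
qed

lemma penalty_along_null_direction:
  assumes "y \<in> null_space_UZ v d r w e s x"
  shows "\<forall>\<^sub>F t in nhds 0. penalty f v d r w e s \<rho> (x + t *\<^sub>R y)
           = f (x + t *\<^sub>R y) + (penalty f v d r w e s \<rho> x - f x) + t * (\<rho> * (u_barZ v d r w e s x \<bullet> y))"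
proof -
  have yv: "\<forall>i\<in>idxZ v d r x. v i \<bullet> y = 0" and yw: "\<forall>j\<in>idxZ w e s x. w j \<bullet> y = 0"
    using assms by (simp_all add: null_space_UZ_def)
  have line: "c \<bullet> (x + t *\<^sub>R y) - a = (c \<bullet> x - a) + t * (c \<bullet> y)" for c a t
    by (simp add: inner_add_right)
  have "\<forall>\<^sub>F t in nhds 0. \<forall>i\<in>{1..r}.
          \<bar>v i \<bullet> (x + t *\<^sub>R y) - d i\<bar> = \<bar>v i \<bullet> x - d i\<bar> + t * (sgn (v i \<bullet> x - d i) * (v i \<bullet> y))"
    unfolding line using yv
    by (intro eventually_ball_finite ballI abs_affine_eventually) (auto simp: idxZ_def)
  moreover have "\<forall>\<^sub>F t in nhds 0. \<forall>j\<in>{1..s}.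
          max 0 (w j \<bullet> (x + t *\<^sub>R y) - e j)
            = max 0 (w j \<bullet> x - e j) + t * (if w j \<bullet> x - e j > 0 then w j \<bullet> y else 0)"
    unfolding line using yw
    by (intro eventually_ball_finite ballI pos_part_affine_eventually) (auto simp: idxZ_def)
  ultimately show ?thesis
  proof eventually_elim
    case (elim t)
    then show ?case
      by (simp add: penalty_def sum.distrib sum_distrib_left penalty_slope_eq_u_barZ[symmetric]
          algebra_simps)
  qed
qed

lemma penalty_stationary:
  fixes f :: "'a::euclidean_space \<Rightarrow> real"
  assumes grad: "(f has_derivative (\<lambda>h. g \<bullet> h)) (at x)"
    and min: "\<forall>z. penalty f v d r w e s \<rho> x \<le> penalty f v d r w e s \<rho> z"
    and y: "y \<in> null_space_UZ v d r w e s x"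
  shows "g \<bullet> y + \<rho> * (u_barZ v d r w e s x \<bullet> y) = 0"
proof -
  have line: "((\<lambda>t. x + t *\<^sub>R y) has_derivative (\<lambda>t. t *\<^sub>R y)) (at 0)"
    by (auto intro!: derivative_eq_intros)
  have "(f has_derivative (\<lambda>h. g \<bullet> h)) (at (x + 0 *\<^sub>R y))" using grad by simp
  from has_derivative_compose[OF line this]
  have "((\<lambda>t. f (x + t *\<^sub>R y)) has_derivative (\<lambda>t. g \<bullet> (t *\<^sub>R y))) (at 0)" .
  then have "((\<lambda>t. f (x + t *\<^sub>R y)) has_real_derivative g \<bullet> y) (at 0)"
    by (simp add: has_field_derivative_def mult_commute_abs)
  then have "((\<lambda>t. f (x + t *\<^sub>R y) + (penalty f v d r w e s \<rho> x - f x)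
                   + t * (\<rho> * (u_barZ v d r w e s x \<bullet> y)))
              has_real_derivative g \<bullet> y + \<rho> * (u_barZ v d r w e s x \<bullet> y)) (at 0)"
    by (auto intro!: derivative_eq_intros)
  then have "((\<lambda>t. penalty f v d r w e s \<rho> (x + t *\<^sub>R y))
              has_real_derivative g \<bullet> y + \<rho> * (u_barZ v d r w e s x \<bullet> y)) (at 0)"
    using DERIV_cong_ev[OF refl penalty_along_null_direction[OF y] refl] by blast
  then show ?thesis
    by (rule DERIV_local_min[where d = 1]) (use min in simp_all)
qed

section \<open>The reduced Newton operator Y N Y^t\<close>

text \<open>For a list Y of vectors (the columns of a matrix) and a square matrix N,
  reduced_solve Y N b is the vector Y N Y^t b.\<close>
definition reduced_solve :: "'a::real_inner list \<Rightarrow> (nat \<Rightarrow> nat \<Rightarrow> real) \<Rightarrow> 'a \<Rightarrow> 'a" where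
  "reduced_solve Y N b = (\<Sum>i<length Y. (\<Sum>j<length Y. N i j * (Y ! j \<bullet> b)) *\<^sub>R Y ! i)"

lemma reduced_solve_linear: "linear (reduced_solve Y N)"
proof (rule linearI)
  fix a b :: 'a
  show "reduced_solve Y N (a + b) = reduced_solve Y N a + reduced_solve Y N b"
    by (simp add: reduced_solve_def inner_add_right distrib_left sum.distrib scaleR_add_left)
next
  fix c :: real and a :: 'a
  show "reduced_solve Y N (c *\<^sub>R a) = c *\<^sub>R reduced_solve Y N a"
    by (simp add: reduced_solve_def scaleR_sum_right sum_distrib_left algebra_simps)
qed

lemma reduced_solve_orthogonal:
  assumes "\<forall>j<length Y. Y ! j \<bullet> b = 0"
  shows "reduced_solve Y N b = 0"
  using assms by (simp add: reduced_solve_def)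

lemma span_list_coeffs:
  fixes Y :: "'a::real_vector list"
  assumes "distinct Y" "z \<in> span (set Y)"
  obtains a where "z = (\<Sum>l<length Y. a l *\<^sub>R Y ! l)"
proof -
  obtain c where c: "z = (\<Sum>v\<in>set Y. c v *\<^sub>R v)"
    using assms(2) span_finite[of "set Y"] by auto
  have "set Y = (!) Y ` {..<length Y}" by (auto simp: set_conv_nth)
  moreover have "inj_on ((!) Y) {..<length Y}" using assms(1) by (simp add: inj_on_nth)
  ultimately have "z = (\<Sum>l<length Y. c (Y ! l) *\<^sub>R Y ! l)"
    using c by (simp add: sum.reindex)
  then show ?thesis by (rule that)
qed

lemma reduced_solve_left_inverse:
  fixes Y :: "'a::real_inner list"
  assumes L: "linear L" and dist: "distinct Y" and z: "z \<in> span (set Y)"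
    and inv: "kmat_is_inverse (length Y) (\<lambda>i j. Y ! i \<bullet> L (Y ! j)) N"
  shows "reduced_solve Y N (L z) = z"
proof -
  define k where "k = length Y"
  obtain a where a: "z = (\<Sum>l<k. a l *\<^sub>R Y ! l)"
    using span_list_coeffs[OF dist z] unfolding k_def by blast
  have LY: "Y ! j \<bullet> L z = (\<Sum>l<k. (Y ! j \<bullet> L (Y ! l)) * a l)" for j
    by (simp add: a linear_sum[OF L] linear_scale[OF L] inner_sum_right mult.commute)
  have coeff: "(\<Sum>j<k. N i j * (Y ! j \<bullet> L z)) = a i" if i: "i < k" for i
  proof -
    have "(\<Sum>j<k. N i j * (Y ! j \<bullet> L z)) = (\<Sum>j<k. \<Sum>l<k. N i j * (Y ! j \<bullet> L (Y ! l)) * a l)"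
      by (simp add: LY sum_distrib_left mult.assoc)
    also have "\<dots> = (\<Sum>l<k. (\<Sum>j<k. N i j * (Y ! j \<bullet> L (Y ! l))) * a l)"
      by (subst sum.swap) (simp add: sum_distrib_right)
    also have "\<dots> = (\<Sum>l<k. if l = i then a l else 0)"
      using inv i unfolding kmat_is_inverse_def kmat_mult_def k_def[symmetric]
      by (intro sum.cong) auto
    also have "\<dots> = a i" using i by (simp add: sum.delta)
    finally show ?thesis .
  qed
  show ?thesis
    unfolding reduced_solve_def k_def[symmetric] by (subst (2) a) (simp add: coeff)
qed

section \<open>Differentiating a solution of a linearizable equation\<close>

lemma norm_diff_le_from_relative_bound:
  fixes \<Delta> a :: "'a::real_normed_vector"
  assumes rel: "norm (\<Delta> - a) \<le> c * norm \<Delta>" and "0 \<le> c" "c \<le> 1/2"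
  shows "norm (\<Delta> - a) \<le> 2 * c * norm a"
proof -
  have "norm \<Delta> \<le> norm a + norm (\<Delta> - a)" by (rule norm_triangle_sub)
  also have "\<dots> \<le> norm a + norm \<Delta> / 2"
    using rel \<open>c \<le> 1/2\<close> mult_right_mono[OF \<open>c \<le> 1/2\<close> norm_ge_zero[of \<Delta>]] by linarith
  finally have "norm \<Delta> \<le> 2 * norm a" by simp
  then show ?thesis using rel mult_left_mono[of "norm \<Delta>" "2 * norm a" c] \<open>0 \<le> c\<close> by simp
qed

lemma has_vector_derivative_from_linearization:
  fixes x :: "real \<Rightarrow> 'a::real_normed_vector" and G :: "'a \<Rightarrow> 'b::real_normed_vector"
  assumes cont: "isCont x \<rho>0"
    and G: "(G has_derivative L) (at (x \<rho>0))"
    and \<Psi>: "bounded_linear \<Psi>"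
    and recover: "\<forall>\<^sub>F \<rho> in at \<rho>0. \<Psi> (L (x \<rho> - x \<rho>0)) = x \<rho> - x \<rho>0"
    and solve: "\<forall>\<^sub>F \<rho> in at \<rho>0. \<Psi> (G (x \<rho>) - G (x \<rho>0)) = (\<rho> - \<rho>0) *\<^sub>R D"
  shows "(x has_vector_derivative D) (at \<rho>0)"
  unfolding has_vector_derivative_def has_derivative_within_alt2
proof (intro conjI allI impI)
  show "bounded_linear (\<lambda>h. h *\<^sub>R D)" by (rule bounded_linear_scaleR_left)
  fix \<epsilon> :: real assume "\<epsilon> > 0"
  obtain B where B: "B > 0" "\<And>b. norm (\<Psi> b) \<le> norm b * B"
    using bounded_linear.pos_bounded[OF \<Psi>] by blast
  define c where "c = min (1/2) (\<epsilon> / (2 * (norm D + 1)))"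
  have c_pos: "0 < c" using \<open>\<epsilon> > 0\<close> by (simp add: c_def add_nonneg_pos)
  have c_half: "c \<le> 1/2" unfolding c_def by (rule min.cobounded1)
  have c_small: "2 * c * norm D \<le> \<epsilon>"
  proof -
    have "2 * c * norm D \<le> 2 * (\<epsilon> / (2 * (norm D + 1))) * norm D"
      by (intro mult_right_mono) (simp_all add: c_def)
    also have "\<dots> = \<epsilon> * (norm D / (norm D + 1))"
      using add_nonneg_pos[OF norm_ge_zero[of D] zero_less_one] by (simp add: field_simps)
    also have "\<dots> \<le> \<epsilon>"
      using \<open>\<epsilon> > 0\<close> by (intro mult_left_le) (auto simp: divide_le_eq_1 add_nonneg_pos)
    finally show ?thesis .
  qed
  have L: "bounded_linear L" and small_o: "\<forall>e>0. \<forall>\<^sub>F z in at (x \<rho>0).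
      norm (G z - G (x \<rho>0) - L (z - x \<rho>0)) \<le> e * norm (z - x \<rho>0)"
    using G unfolding has_derivative_within_alt2 by blast+
  have "\<forall>\<^sub>F z in nhds (x \<rho>0). norm (G z - G (x \<rho>0) - L (z - x \<rho>0)) \<le> (c / B) * norm (z - x \<rho>0)"
    unfolding eventually_nhds_conv_at
    using small_o[rule_format, of "c / B"] c_pos B(1) linear_0[OF bounded_linear.linear[OF L]]
    by simp
  then have remainder: "\<forall>\<^sub>F \<rho> in at \<rho>0.
      norm (G (x \<rho>) - G (x \<rho>0) - L (x \<rho> - x \<rho>0)) \<le> (c / B) * norm (x \<rho> - x \<rho>0)"
    by (rule eventually_compose_filterlim[OF _ cont[unfolded isCont_def]])
  show "\<forall>\<^sub>F \<rho> in at \<rho>0. norm (x \<rho> - x \<rho>0 - (\<rho> - \<rho>0) *\<^sub>R D) \<le> \<epsilon> * norm (\<rho> - \<rho>0)"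
    using recover solve remainder
  proof eventually_elim
    case (elim \<rho>)
    define \<Delta> where "\<Delta> = x \<rho> - x \<rho>0"
    define Er where "Er = G (x \<rho>) - G (x \<rho>0) - L \<Delta>"
    have "\<Delta> - (\<rho> - \<rho>0) *\<^sub>R D = - \<Psi> Er"
      using elim(1,2) by (simp add: Er_def \<Delta>_def linear_diff[OF bounded_linear.linear[OF \<Psi>]])
    then have "norm (\<Delta> - (\<rho> - \<rho>0) *\<^sub>R D) \<le> norm Er * B" using B(2)[of Er] by simp
    also have "\<dots> \<le> (c / B) * norm \<Delta> * B"
      using mult_right_mono[OF elim(3) less_imp_le[OF B(1)]] by (simp add: Er_def \<Delta>_def)
    finally have "norm (\<Delta> - (\<rho> - \<rho>0) *\<^sub>R D) \<le> c * norm \<Delta>" using B(1) by simp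
    from norm_diff_le_from_relative_bound[OF this less_imp_le[OF c_pos] c_half]
    have "norm (\<Delta> - (\<rho> - \<rho>0) *\<^sub>R D) \<le> (2 * c * norm D) * \<bar>\<rho> - \<rho>0\<bar>" by (simp add: ac_simps)
    also have "\<dots> \<le> \<epsilon> * \<bar>\<rho> - \<rho>0\<bar>" using c_small by (simp add: mult_right_mono)
    finally show ?case by (simp add: \<Delta>_def)
  qed
qed

theorem proposition4:
  fixes f :: "real ^ 'p \<Rightarrow> real"
    and grad :: "real ^ 'p \<Rightarrow> real ^ 'p"
    and H :: "real ^ 'p \<Rightarrow> real ^ 'p ^ 'p"
    and v :: "nat \<Rightarrow> real ^ 'p" and d :: "nat \<Rightarrow> real" and r :: nat
    and w :: "nat \<Rightarrow> real ^ 'p" and e :: "nat \<Rightarrow> real" and s :: nat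
    and I :: "real set"
    and x :: "real \<Rightarrow> real ^ 'p"
    and Y :: "(real ^ 'p) list"
  assumes convex: "convex_on UNIV f"
    and grad: "\<And>z. (f has_derivative (\<lambda>h. grad z \<bullet> h)) (at z)"
    and hess: "\<And>z. (grad has_derivative (\<lambda>h. H z *v h)) (at z)"
    and hess_cont: "continuous_on UNIV H"
    and I_open: "open I" and I_interval: "is_interval I" and I_ne: "I \<noteq> {}"
    and I_pos: "I \<subseteq> {0<..}"
    and minimizer: "\<And>\<rho>. \<rho> \<in> I \<Longrightarrow> \<forall>y. penalty f v d r w e s \<rho> (x \<rho>) \<le> penalty f v d r w e s \<rho> y"
    and unique: "\<And>\<rho> y. \<rho> \<in> I \<Longrightarrow> \<forall>z. penalty f v d r w e s \<rho> y \<le> penalty f v d r w e s \<rho> z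
                   \<Longrightarrow> y = x \<rho>"
    and x_cont: "continuous_on I x"
    and const_idx: "\<And>\<rho>1 \<rho>2. \<rho>1 \<in> I \<Longrightarrow> \<rho>2 \<in> I \<Longrightarrow>
         idxN v d r (x \<rho>1) = idxN v d r (x \<rho>2) \<and> idxZ v d r (x \<rho>1) = idxZ v d r (x \<rho>2) \<and>
         idxP v d r (x \<rho>1) = idxP v d r (x \<rho>2) \<and> idxN w e s (x \<rho>1) = idxN w e s (x \<rho>2) \<and>
         idxZ w e s (x \<rho>1) = idxZ w e s (x \<rho>2) \<and> idxP w e s (x \<rho>1) = idxP w e s (x \<rho>2)"
    and UZ_indep: "\<And>\<rho>. \<rho> \<in> I \<Longrightarrow>
         inj_on (case_sum v w) (idxZ v d r (x \<rho>) <+> idxZ w e s (x \<rho>)) \<and>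
         independent (case_sum v w ` (idxZ v d r (x \<rho>) <+> idxZ w e s (x \<rho>)))"
    and Y_len: "\<And>\<rho>. \<rho> \<in> I \<Longrightarrow>
         length Y = CARD('p) - (card (idxZ v d r (x \<rho>)) + card (idxZ w e s (x \<rho>)))"
    and Y_basis: "\<And>\<rho>. \<rho> \<in> I \<Longrightarrow> distinct Y \<and> independent (set Y) \<and>
         span (set Y) = {y. (\<forall>i\<in>idxZ v d r (x \<rho>). v i \<bullet> y = 0) \<and> (\<forall>j\<in>idxZ w e s (x \<rho>). w j \<bullet> y = 0)}"
    and nonsing: "\<And>\<rho>. \<rho> \<in> I \<Longrightarrow>
         kmat_nonsingular (length Y) (\<lambda>i j. Y ! i \<bullet> (H (x \<rho>) *v Y ! j))"
  shows "\<forall>\<rho>\<in>I. (x has_vector_derivative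
           (let k = length Y;
                Minv = kmat_inv k (\<lambda>i j. Y ! i \<bullet> (H (x \<rho>) *v Y ! j));
                b = (\<lambda>j. Y ! j \<bullet> u_barZ v d r w e s (x \<rho>))
            in - (\<Sum>i<k. (\<Sum>j<k. Minv i j * b j) *\<^sub>R Y ! i))) (at \<rho>)"
proof
  fix \<rho>0 assume \<rho>0: "\<rho>0 \<in> I"
  define N where "N = kmat_inv (length Y) (\<lambda>i j. Y ! i \<bullet> (H (x \<rho>0) *v Y ! j))"
  define u where "u = u_barZ v d r w e s (x \<rho>0)"
  define \<Psi> where "\<Psi> = reduced_solve Y N"
  have inv: "kmat_is_inverse (length Y) (\<lambda>i j. Y ! i \<bullet> (H (x \<rho>0) *v Y ! j)) N"
    unfolding N_def by (rule kmat_inv_inverse[OF nonsing[OF \<rho>0]])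
  have \<Psi>_linear: "linear \<Psi>" unfolding \<Psi>_def by (rule reduced_solve_linear)
  text \<open>The index sets, hence u and the null space of U_Z, are the same all over I.\<close>
  have null_space: "span (set Y) = null_space_UZ v d r w e s (x \<rho>)" if "\<rho> \<in> I" for \<rho>
    using Y_basis[OF that] by (simp add: null_space_UZ_def)
  have u_const: "u_barZ v d r w e s (x \<rho>) = u" if "\<rho> \<in> I" for \<rho>
    using const_idx[OF that \<rho>0] by (simp add: u_def u_barZ_def)
  have increment: "x \<rho> - x \<rho>0 \<in> span (set Y)" if "\<rho> \<in> I" for \<rho>
    using const_idx[OF that \<rho>0] null_space[OF \<rho>0] by (simp add: diff_in_null_space_UZ)
  have stationary: "Y ! j \<bullet> grad (x \<rho>) + \<rho> * (Y ! j \<bullet> u) = 0" if "\<rho> \<in> I" "j < length Y" for \<rho> j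
    using penalty_stationary[OF grad minimizer[OF that(1)], of "Y ! j"] null_space[OF that(1)]
      span_base[OF nth_mem[OF that(2)]] u_const[OF that(1)] by (simp add: inner_commute)
  have "\<Psi> (grad (x \<rho>) - grad (x \<rho>0)) = (\<rho> - \<rho>0) *\<^sub>R (- \<Psi> u)" if "\<rho> \<in> I" for \<rho>
  proof -
    have "\<Psi> (grad (x \<rho>) - grad (x \<rho>0) + (\<rho> - \<rho>0) *\<^sub>R u) = 0"
      unfolding \<Psi>_def using stationary \<rho>0 that
      by (intro reduced_solve_orthogonal) (auto simp: inner_add_right inner_diff_right algebra_simps)
    then show ?thesis by (simp add: linear_add[OF \<Psi>_linear] linear_scale[OF \<Psi>_linear] eq_neg_iff_add_eq_0)
  qed
  moreover have "\<Psi> (H (x \<rho>0) *v (x \<rho> - x \<rho>0)) = x \<rho> - x \<rho>0" if "\<rho> \<in> I" for \<rho>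
    unfolding \<Psi>_def using Y_basis[OF \<rho>0] increment[OF that] inv
    by (intro reduced_solve_left_inverse) (simp_all add: matrix_vector_mul_linear)
  ultimately have "(x has_vector_derivative - \<Psi> u) (at \<rho>0)"
    using eventually_at_in_open'[OF I_open \<rho>0] x_cont I_open \<rho>0 hess \<Psi>_linear
    by (intro has_vector_derivative_from_linearization[where G = grad])
       (auto elim!: eventually_mono simp: continuous_on_eq_continuous_at linear_conv_bounded_linear)
  then show "(x has_vector_derivative
           (let k = length Y;
                Minv = kmat_inv k (\<lambda>i j. Y ! i \<bullet> (H (x \<rho>0) *v Y ! j));
                b = (\<lambda>j. Y ! j \<bullet> u_barZ v d r w e s (x \<rho>0))
            in - (\<Sum>i<k. (\<Sum>j<k. Minv i j * b j) *\<^sub>R Y ! i))) (at \<rho>0)"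
    by (simp add: Let_def \<Psi>_def reduced_solve_def N_def u_def)
qed

end
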